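(* For every $t\in(0,1)$ and every nonnegative integer $n$, $$\sum_{k\ge0} B^{n-k}_k(t) = \frac{1-(-t)^{n+1}}{1+t}.$$
   Context: The Bernstein polynomials are $B^m_k(t) = \binom{m}{k} t^k (1-t)^{m-k}$ for integers $0\le k\le m$, and $B^m_k(t)=0$ for $m<k$. *)

theory Defs
  imports "HOL-Analysis.Analysis"
begin

text \<open>Bernstein polynomial B^m_k(t) = (m choose k) t^k (1-t)^(m-k) for 0 \<le> k \<le> m,
  and 0 when m < k (m is an integer so that negative upper indices are allowed).\<close>
definition bernstein :: "int \<Rightarrow> nat \<Rightarrow> real \<Rightarrow> real" where
  "bernstein m k t =
     (if int k \<le> m then real (nat m choose k) * t ^ k * (1 - t) ^ (nat m - k) else 0)"

end

theory Submission
  imports Defs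
begin

text \<open>Write \<open>S n = \<Sum>\<^sub>k B\<^sup>n\<^sup>-\<^sup>k\<^sub>k(t)\<close> for the diagonal sums.
  Pascal's rule \<open>B\<^sup>m\<^sup>+\<^sup>1\<^sub>k\<^sub>+\<^sub>1 = (1 - t) B\<^sup>m\<^sub>k\<^sub>+\<^sub>1 + t B\<^sup>m\<^sub>k\<close>,
  summed along a diagonal, gives the recurrence \<open>S (n + 2) = (1 - t) S (n + 1) + t S n\<close>, whose
  characteristic roots are \<open>1\<close> and \<open>-t\<close>. Together with \<open>S 0 = 1\<close> and \<open>S 1 = 1 - t\<close>
  this forces \<open>(1 + t) S n = 1 - (-t)\<^sup>n\<^sup>+\<^sup>1\<close>.\<close>

lemma Bernstein_eq_0: "n < k \<Longrightarrow> Bernstein n k t = 0"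
  by (simp add: Bernstein_def)

lemma Bernstein_0_Suc: "Bernstein (Suc n) 0 t = (1 - t) * Bernstein n 0 t"
  by (simp add: Bernstein_def)

lemma Bernstein_Suc_Suc:
  "Bernstein (Suc n) (Suc k) t = (1 - t) * Bernstein n (Suc k) t + t * Bernstein n k t"
proof (cases "k < n")
  case True
  then have "Suc n - Suc k = Suc (n - Suc k)" "n - k = Suc (n - Suc k)" by auto
  then show ?thesis by (simp add: Bernstein_def algebra_simps)
next
  case False
  then consider "k = n" | "n < k" by linarith
  then show ?thesis by cases (simp add: Bernstein_def, simp add: Bernstein_eq_0)
qed

lemma bernstein_int_diff: "bernstein (int n - int k) k t = Bernstein (n - k) k t"
  by (cases "k \<le> n - k") (auto simp: bernstein_def Bernstein_def nat_diff_distrib)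

definition Bernstein_diagonal_sum :: "nat \<Rightarrow> real \<Rightarrow> real" where
  "Bernstein_diagonal_sum n t = (\<Sum>k\<le>n. Bernstein (n - k) k t)"

lemma Bernstein_diagonal_sum_extend:
  assumes "n \<le> N"
  shows "Bernstein_diagonal_sum n t = (\<Sum>k\<le>N. Bernstein (n - k) k t)"
  using assms
proof (induction N rule: dec_induct)
  case (step N)
  then show ?case by (simp add: Bernstein_eq_0)
qed (simp add: Bernstein_diagonal_sum_def)

lemma Bernstein_diagonal_sum_rec:
  "Bernstein_diagonal_sum (n + 2) t
     = (1 - t) * Bernstein_diagonal_sum (n + 1) t + t * Bernstein_diagonal_sum n t"
proof -
  let ?B = "\<lambda>m k. Bernstein m k t"
  have pascal: "?B (n + 1 - k) (Suc k) = (1 - t) * ?B (n - k) (Suc k) + t * ?B (n - k) k" for k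
    by (cases "k \<le> n") (auto simp: Suc_diff_le Bernstein_Suc_Suc Bernstein_eq_0)
  have "Bernstein_diagonal_sum (n + 2) t = ?B (n + 2) 0 + (\<Sum>k\<le>n + 1. ?B (n + 1 - k) (Suc k))"
    by (simp add: Bernstein_diagonal_sum_def sum.atMost_Suc_shift del: sum.atMost_Suc)
  also have "(\<Sum>k\<le>n + 1. ?B (n + 1 - k) (Suc k))
             = (1 - t) * (\<Sum>k\<le>n + 1. ?B (n - k) (Suc k)) + t * (\<Sum>k\<le>n + 1. ?B (n - k) k)"
    by (simp only: pascal sum.distrib sum_distrib_left)
  also have "?B (n + 2) 0 + \<dots> = (1 - t) * (?B (n + 1) 0 + (\<Sum>k\<le>n + 1. ?B (n - k) (Suc k)))
                                      + t * (\<Sum>k\<le>n + 1. ?B (n - k) k)"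
    using Bernstein_0_Suc[of "n + 1" t] by (simp add: algebra_simps)
  also have "?B (n + 1) 0 + (\<Sum>k\<le>n + 1. ?B (n - k) (Suc k)) = (\<Sum>k\<le>n + 2. ?B (n + 1 - k) k)"
    by (simp add: sum.atMost_Suc_shift del: sum.atMost_Suc)
  also have "\<dots> = Bernstein_diagonal_sum (n + 1) t"
    by (rule Bernstein_diagonal_sum_extend[symmetric]) simp
  also have "(\<Sum>k\<le>n + 1. ?B (n - k) k) = Bernstein_diagonal_sum n t"
    by (rule Bernstein_diagonal_sum_extend[symmetric]) simp
  finally show ?thesis .
qed

lemma Bernstein_diagonal_sum_closed_form:
  "(1 + t) * Bernstein_diagonal_sum n t = 1 - (- t) ^ (n + 1)"
proof (induction n rule: less_induct)
  case (less n)
  consider "n = 0" | "n = 1" | m where "n = m + 2"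
    by (metis add_2_eq_Suc' not0_implies_Suc One_nat_def)
  then show ?case
  proof cases
    case 3
    have "(1 + t) * Bernstein_diagonal_sum n t
          = (1 - t) * ((1 + t) * Bernstein_diagonal_sum (m + 1) t)
            + t * ((1 + t) * Bernstein_diagonal_sum m t)"
      unfolding 3 Bernstein_diagonal_sum_rec by (simp add: algebra_simps)
    also have "\<dots> = (1 - t) * (1 - (- t) ^ (m + 2)) + t * (1 - (- t) ^ (m + 1))"
      using less[of "m + 1"] less[of m] 3 by simp
    finally show ?thesis by (simp add: 3 algebra_simps)
  qed (simp_all add: Bernstein_diagonal_sum_def Bernstein_def algebra_simps power2_eq_square)
qed

theorem mainTheorem18:
  fixes t :: real and n :: nat
  assumes "0 < t" and "t < 1"
  shows "infsum (\<lambda>k::nat. bernstein (int n - int k) k t) UNIV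
           = (1 - (- t) ^ (n + 1)) / (1 + t)"
proof -
  have "infsum (\<lambda>k::nat. bernstein (int n - int k) k t) UNIV
      = infsum (\<lambda>k::nat. bernstein (int n - int k) k t) {..n}"
    by (rule infsum_cong_neutral) (auto simp: bernstein_int_diff Bernstein_eq_0)
  also have "\<dots> = Bernstein_diagonal_sum n t"
    by (simp add: Bernstein_diagonal_sum_def bernstein_int_diff)
  also have "\<dots> = (1 - (- t) ^ (n + 1)) / (1 + t)"
    using Bernstein_diagonal_sum_closed_form[of t n] assms(1)
    by (simp add: eq_divide_eq mult.commute)
  finally show ?thesis .
qed

end
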